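(* Let $N>1$ be an integer, let $a<b$ be real numbers, and let $\mathcal{X}=(x_1,\dots,x_N)$ be a finite list of $N$ real numbers in $[a,b]$ with mean $\mu=\frac{1}{N}\sum_{i=1}^N x_i$. Let $0<\epsilon<1$ and $0<\delta<1$, and put $$u=\frac{\log(1/\delta)}{2}\cdot\frac{(b-a)^2}{\epsilon^2}.$$ Let $m$ be an integer with $1\le m<N$ and $$m\ \ge\ \min\left\{\frac{u+1}{1+\frac{u}{N}},\ \frac{u+\frac{u}{N}}{1+\frac{u}{N}}\right\}.$$ Let $(X_1,\dots,X_m)$ be a sample of size $m$ drawn uniformly at random without replacement from $\mathcal{X}$. Then $$\mathbb{P}\left[\frac{1}{m}\sum_{t=1}^m X_t-\mu\le \epsilon\right]\ \ge\ 1-\delta .$$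
   Context: Sampling without replacement from the list $\mathcal{X}$ means choosing $m$ distinct indices uniformly at random from $\{1,\dots,N\}$, in order, and setting $X_t$ to be the entry of $\mathcal{X}$ at the $t$-th chosen index. *)

theory Defs
  imports "HOL-Probability.Probability"
begin

definition index_samples :: "nat \<Rightarrow> nat \<Rightarrow> nat list set" where
  "index_samples N m = {is. length is = m \<and> distinct is \<and> set is \<subseteq> {..<N}}"

text \<open>Sampling without replacement of size m from the list X: a uniformly random
  ordered sample of distinct indices, mapped to the entries of X.\<close>
definition sample_wor :: "real list \<Rightarrow> nat \<Rightarrow> real list pmf" where
  "sample_wor X m = map_pmf (map (\<lambda>i. X ! i)) (pmf_of_set (index_samples (length X) m))"

end

theory Submission
  imports Defs
begin

text \<open>
  Probabilities over a uniformly random ordering \<open>p\<close> of the population are expressed as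
  numbers of permutations, i.e. sums over \<open>permutations_of_set\<close> divided by \<open>n!\<close>.
  Let \<open>S\<^sub>m(p)\<close> be the sum of the first \<open>m\<close> entries of \<open>p\<close>, centred at the population mean.
  Splitting off the first entry \<open>i\<close> gives \<open>S\<^sub>m\<^sub>+\<^sub>1 = c (x i - \<mu>) + S'\<^sub>m\<close> with
  \<open>c = (n - 1 - m) / (n - 1)\<close>, where \<open>S'\<^sub>m\<close> is centred at the mean of the remaining population.
  Hoeffding's lemma for the first draw and induction bound \<open>E exp (l S\<^sub>m)\<close> by
  \<open>exp (l\<^sup>2 (b - a)\<^sup>2 m (1 - (m - 1) / n) / 8)\<close>, and Chernoff's bound gives Serfling's inequality.
  As \<open>S\<^sub>m\<close> is minus the centred sum of the last \<open>n - m\<close> entries, the same holds with the factor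
  \<open>(n - m) (m + 1) / n\<close>; the two terms of the minimum in the sample-size condition correspond to
  these two bounds. The first \<open>m\<close> entries of a uniform ordering form a uniform sample
  without replacement.
\<close>

definition avg :: "'a set \<Rightarrow> ('a \<Rightarrow> real) \<Rightarrow> real" where
  "avg I x = (\<Sum>i\<in>I. x i) / card I"

definition centered_sum :: "'a set \<Rightarrow> ('a \<Rightarrow> real) \<Rightarrow> 'a list \<Rightarrow> real" where
  "centered_sum I x ys = (\<Sum>i\<leftarrow>ys. x i - avg I x)"

definition serfling_factor :: "nat \<Rightarrow> nat \<Rightarrow> real" where
  "serfling_factor n m = real m * (real n + 1 - real m) / real n"

section \<open>Centred sums over orderings\<close>

lemma centered_sum_eq: "centered_sum I x ys = (\<Sum>i\<leftarrow>ys. x i) - length ys * avg I x"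
  by (simp add: centered_sum_def sum_list_subtractf sum_list_triv)

lemma centered_sum_uminus: "centered_sum I (\<lambda>i. - x i) ys = - centered_sum I x ys"
  by (induction ys) (simp_all add: centered_sum_def avg_def sum_negf)

lemma centered_sum_permutation_eq_0:
  assumes "finite I" "p \<in> permutations_of_set I"
  shows "centered_sum I x p = 0"
proof -
  have "distinct p" "set p = I" using assms(2) by (auto simp: permutations_of_set_def)
  then show ?thesis
    using assms(1) by (simp add: centered_sum_def sum_list_distinct_conv_sum_set sum_subtractf avg_def)
qed

lemma sum_permutations_of_set_nonempty:
  assumes "finite I" "I \<noteq> {}"
  shows "(\<Sum>p\<in>permutations_of_set I. g p) = (\<Sum>i\<in>I. \<Sum>r\<in>permutations_of_set (I - {i}). g (i # r))"
proof -
  have "(\<Sum>p\<in>permutations_of_set I. g p) = (\<Sum>p\<in>(\<Union>i\<in>I. (#) i ` permutations_of_set (I - {i})). g p)"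
    using assms by (simp add: permutations_of_set_nonempty)
  also have "\<dots> = (\<Sum>i\<in>I. \<Sum>p\<in>(#) i ` permutations_of_set (I - {i}). g p)"
    using assms by (intro sum.UNION_disjoint) auto
  also have "\<dots> = (\<Sum>i\<in>I. \<Sum>r\<in>permutations_of_set (I - {i}). g (i # r))"
    by (simp add: sum.reindex)
  finally show ?thesis .
qed

text \<open>Removing the first draw \<open>i\<close> shifts the mean of the remaining population by
  \<open>(avg I x - x i) / (n - 1)\<close>, which turns the coefficient of \<open>x i - avg I x\<close> into
  \<open>(n - 1 - m) / (n - 1)\<close>.\<close>
lemma centered_sum_take_Cons:
  assumes "finite I" "i \<in> I" "r \<in> permutations_of_set (I - {i})" "m < card I"
  shows "centered_sum I x (take (Suc m) (i # r))
       = real (card I - Suc m) / real (card I - 1) * (x i - avg I x) + centered_sum (I - {i}) x (take m r)"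
proof (cases "card I = 1")
  case True
  then have "I = {i}" "m = 0" using assms by (auto simp: card_1_singleton_iff)
  then show ?thesis by (simp add: centered_sum_def avg_def)
next
  case False
  define n where "n = card I"
  have n: "real n \<ge> 2" using False assms by (simp add: n_def card_gt_0_iff)
  have "length r = n - 1" using assms by (simp add: length_finite_permutations_of_set n_def)
  then have len: "length (take m r) = m" using assms by (simp add: n_def)
  have "(\<Sum>j\<in>I. x j) = x i + (\<Sum>j\<in>I - {i}. x j)"
    using assms by (simp add: sum.remove)
  then have "avg (I - {i}) x = (n * avg I x - x i) / (n - 1)"
    using assms n by (auto simp: avg_def n_def of_nat_diff)
  then show ?thesis
    unfolding centered_sum_eq using len n assms
    by (simp add: n_def[symmetric] of_nat_diff field_simps) (metis distrib_left)
qed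

lemma centered_sum_take_eq_rev:
  assumes "finite I" "p \<in> permutations_of_set I"
  shows "centered_sum I x (take m p) = centered_sum I (\<lambda>i. - x i) (take (card I - m) (rev p))"
proof -
  have "length p = card I" using assms by (simp add: length_finite_permutations_of_set)
  then have "take (card I - m) (rev p) = rev (drop m p)" by (simp add: rev_drop)
  moreover have "centered_sum I x (take m p) + centered_sum I x (drop m p) = 0"
    using centered_sum_permutation_eq_0[OF assms, of x]
    by (metis append_take_drop_id centered_sum_def map_append sum_list_append)
  ultimately show ?thesis
    by (simp add: centered_sum_uminus centered_sum_def rev_map[symmetric] sum_list_rev)
qed

section \<open>Uniform orderings and sampling without replacement\<close>

lemma card_permutations_of_set_take_eq:
  assumes "finite U" "length xs = m" "distinct xs" "set xs \<subseteq> U"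
  shows "card {p \<in> permutations_of_set U. take m p = xs} = fact (card U - m)"
proof -
  have "{p \<in> permutations_of_set U. take m p = xs} = (@) xs ` permutations_of_set (U - set xs)"
  proof (intro equalityI subsetI)
    fix p assume p: "p \<in> {p \<in> permutations_of_set U. take m p = xs}"
    then have "take m p = xs" "distinct p" "set p = U"
      by (auto simp: permutations_of_set_def)
    then have "p = xs @ drop m p" "distinct (xs @ drop m p)" "set (xs @ drop m p) = U"
      by (metis append_take_drop_id)+
    moreover have "r \<in> permutations_of_set (U - set xs)"
      if "distinct (xs @ r)" "set (xs @ r) = U" for r
      using that by (auto simp: permutations_of_set_def)
    ultimately show "p \<in> (@) xs ` permutations_of_set (U - set xs)"
      by (metis image_eqI)
  qed (use assms in \<open>auto simp: permutations_of_set_def\<close>)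
  then show ?thesis
    using assms by (simp add: card_image inj_on_def card_Diff_subset distinct_card)
qed

lemma map_pmf_take_permutations_of_set:
  assumes "finite U" "m \<le> card U"
  shows "map_pmf (take m) (pmf_of_set (permutations_of_set U))
       = pmf_of_set {xs. length xs = m \<and> distinct xs \<and> set xs \<subseteq> U}"
    (is "_ = pmf_of_set ?T")
proof (rule pmf_eqI)
  fix xs
  let ?P = "permutations_of_set U"
  have "finite ?T"
    by (rule finite_subset[OF _ finite_lists_length_eq[OF assms(1), of m]]) auto
  have "card ?T = \<Prod>{card U - m + 1..card U}"
    using assms by (rule card_lists_distinct_length_eq)
  moreover have "fact (card U) = fact (card U - m) * \<Prod>{Suc (card U - m)..card U}"
    by (rule fact_eq_fact_times) simp
  ultimately have card_T: "card ?T * fact (card U - m) = fact (card U)"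
    by simp
  then have T_nonempty: "?T \<noteq> {}"
    by (cases "?T = {}") auto
  from arg_cong[where f = real, OF card_T]
  have T: "real (card ?T) * fact (card U - m) = fact (card U)"
    by simp
  have take_in_T: "take m p \<in> ?T" if "p \<in> ?P" for p
    using that assms(2) by (auto simp: permutations_of_set_def distinct_card dest: in_set_takeD)
  have "?P \<inter> take m -` {xs} = {p \<in> ?P. take m p = xs}"
    by blast
  then have "pmf (map_pmf (take m) (pmf_of_set ?P)) xs = card {p \<in> ?P. take m p = xs} / fact (card U)"
    using assms(1) by (simp add: pmf_map measure_pmf_of_set)
  also have "\<dots> = indicator ?T xs / card ?T"
  proof (cases "xs \<in> ?T")
    case True
    then have "card {p \<in> ?P. take m p = xs} = fact (card U - m)"
      using card_permutations_of_set_take_eq[OF assms(1)] by auto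
    then show ?thesis
      using True T_nonempty \<open>finite ?T\<close> by (simp flip: T)
  next
    case False
    then have "{p \<in> ?P. take m p = xs} = {}" using take_in_T by blast
    then show ?thesis using False by simp
  qed
  also have "\<dots> = pmf (pmf_of_set ?T) xs"
    using \<open>finite ?T\<close> T_nonempty by simp
  finally show "pmf (map_pmf (take m) (pmf_of_set ?P)) xs = pmf (pmf_of_set ?T) xs" .
qed

section \<open>Serfling's inequality\<close>

lemma hoeffding_lemma_avg:
  fixes x :: "'a \<Rightarrow> real"
  assumes "finite I" "I \<noteq> {}" "\<forall>i\<in>I. a \<le> x i \<and> x i \<le> b" "l \<ge> 0"
  shows "(\<Sum>i\<in>I. exp (l * (x i - avg I x))) \<le> card I * exp (l\<^sup>2 * (b - a)\<^sup>2 / 8)"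
proof (cases "l = 0")
  case False
  let ?M = "measure_pmf (pmf_of_set I)"
  interpret P: interval_bounded_random_variable ?M x a b
    by unfold_locales (use assms in \<open>auto simp: AE_measure_pmf_iff\<close>)
  have "nn_integral ?M (\<lambda>i. exp (l * (x i - measure_pmf.expectation (pmf_of_set I) x)))
      \<le> ennreal (exp (l\<^sup>2 * (b - a)\<^sup>2 / 8))"
    by (rule P.Hoeffdings_lemma_nn_integral) (use assms False in auto)
  moreover have "measure_pmf.expectation (pmf_of_set I) x = avg I x"
    using assms by (simp add: integral_pmf_of_set avg_def)
  ultimately have "ennreal (\<Sum>i\<in>I. exp (l * (x i - avg I x))) / ennreal (card I)
      \<le> ennreal (exp (l\<^sup>2 * (b - a)\<^sup>2 / 8))"
    using assms by (simp add: nn_integral_pmf_of_set sum_ennreal ennreal_of_nat_eq_real_of_nat)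
  then have "(\<Sum>i\<in>I. exp (l * (x i - avg I x))) / card I \<le> exp (l\<^sup>2 * (b - a)\<^sup>2 / 8)"
    using assms by (subst (asm) divide_ennreal) (auto simp: sum_nonneg card_gt_0_iff)
  then show ?thesis
    using assms by (simp add: divide_le_eq card_gt_0_iff mult.commute)
qed simp

lemma serfling_factor_pos: "1 \<le> m \<Longrightarrow> m \<le> n \<Longrightarrow> serfling_factor n m > 0"
  by (simp add: serfling_factor_def)

lemma serfling_factor_step:
  assumes "m < n"
  shows "(real (n - Suc m) / real (n - 1))\<^sup>2 + serfling_factor (n - 1) m \<le> serfling_factor n (Suc m)"
proof (cases "n = 1")
  case True
  with assms show ?thesis by (simp add: serfling_factor_def)
next
  case False
  define d where "d = real (n - Suc m)"
  define k where "k = real (n - 1)"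
  have k: "k > 0" "k = m + d" and d: "d \<ge> 0"
    using assms False by (auto simp: k_def d_def of_nat_diff)
  have "(m + 1) * (d + 1) * k\<^sup>2 - (d\<^sup>2 * (k + 1) + m * (d + 1) * k * (k + 1)) = d * m"
    unfolding k(2) by (simp add: algebra_simps power2_eq_square)
  moreover have "d * m \<ge> 0" using d by simp
  ultimately have "d\<^sup>2 * (k + 1) + m * (d + 1) * k * (k + 1) \<le> (m + 1) * (d + 1) * k\<^sup>2"
    by linarith
  then have "(d / k)\<^sup>2 + m * (d + 1) / k \<le> (m + 1) * (d + 1) / (k + 1)"
    using k(1) by (simp add: field_simps power2_eq_square)
  moreover have "serfling_factor (n - 1) m = m * (d + 1) / k"
    and "serfling_factor n (Suc m) = (m + 1) * (d + 1) / (k + 1)"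
    using assms by (simp_all add: serfling_factor_def k_def d_def of_nat_diff)
  ultimately show ?thesis by (simp add: d_def k_def)
qed

lemma sum_exp_centered_sum_take_le:
  fixes x :: "'a \<Rightarrow> real"
  assumes "finite I" "\<forall>i\<in>I. a \<le> x i \<and> x i \<le> b" "m \<le> card I" "l \<ge> 0"
  shows "(\<Sum>p\<in>permutations_of_set I. exp (l * centered_sum I x (take m p)))
           \<le> fact (card I) * exp (l\<^sup>2 * (b - a)\<^sup>2 * serfling_factor (card I) m / 8)"
  using assms(1-3)
proof (induction m arbitrary: I)
  case 0
  then show ?case by (simp add: centered_sum_def serfling_factor_def)
next
  case (Suc m)
  define n where "n = card I"
  define c where "c = real (n - Suc m) / real (n - 1)"
  define E where "E = exp (l\<^sup>2 * (b - a)\<^sup>2 * serfling_factor (n - 1) m / 8)"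
  have I: "I \<noteq> {}" "m < n" using Suc.prems by (auto simp: n_def)
  have IH: "(\<Sum>r\<in>permutations_of_set (I - {i}). exp (l * centered_sum (I - {i}) x (take m r)))
      \<le> fact (n - 1) * E"
    if "i \<in> I" for i
    using Suc.IH[of "I - {i}"] Suc.prems that by (simp add: n_def E_def)
  have Cons: "exp (l * centered_sum I x (take (Suc m) (i # r)))
      = exp (l * c * (x i - avg I x)) * exp (l * centered_sum (I - {i}) x (take m r))"
    if "i \<in> I" "r \<in> permutations_of_set (I - {i})" for i r
    using centered_sum_take_Cons[OF Suc.prems(1) that, where m = m and x = x] I
    by (simp add: c_def n_def distrib_left exp_add mult.assoc)
  have "(\<Sum>p\<in>permutations_of_set I. exp (l * centered_sum I x (take (Suc m) p)))
      = (\<Sum>i\<in>I. exp (l * c * (x i - avg I x))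
           * (\<Sum>r\<in>permutations_of_set (I - {i}). exp (l * centered_sum (I - {i}) x (take m r))))"
    unfolding sum_permutations_of_set_nonempty[OF Suc.prems(1) I(1)] sum_distrib_left
    by (rule sum.cong[OF refl], rule sum.cong[OF refl], rule Cons)
  also have "\<dots> \<le> (\<Sum>i\<in>I. exp ((l * c) * (x i - avg I x))) * (fact (n - 1) * E)"
    unfolding sum_distrib_right by (intro sum_mono mult_left_mono IH) auto
  also have "\<dots> \<le> n * exp ((l * c)\<^sup>2 * (b - a)\<^sup>2 / 8) * (fact (n - 1) * E)"
    using hoeffding_lemma_avg[of I a x b "l * c"] Suc.prems I assms(4)
    by (intro mult_right_mono) (auto simp: c_def n_def E_def)
  also have "\<dots> \<le> fact n * exp (l\<^sup>2 * (b - a)\<^sup>2 * serfling_factor n (Suc m) / 8)"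
  proof -
    have "l\<^sup>2 * (b - a)\<^sup>2 * (c\<^sup>2 + serfling_factor (n - 1) m)
        \<le> l\<^sup>2 * (b - a)\<^sup>2 * serfling_factor n (Suc m)"
      using serfling_factor_step[OF I(2)] by (intro mult_left_mono) (auto simp: c_def)
    then have "exp ((l * c)\<^sup>2 * (b - a)\<^sup>2 / 8) * E
        \<le> exp (l\<^sup>2 * (b - a)\<^sup>2 * serfling_factor n (Suc m) / 8)"
      by (simp add: E_def flip: exp_add) (simp add: power_mult_distrib algebra_simps)
    then have "real n * fact (n - 1) * (exp ((l * c)\<^sup>2 * (b - a)\<^sup>2 / 8) * E)
        \<le> real n * fact (n - 1) * exp (l\<^sup>2 * (b - a)\<^sup>2 * serfling_factor n (Suc m) / 8)"
      by (rule mult_left_mono) simp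
    moreover have "fact n = real n * fact (n - 1)" using I by (simp add: fact_reduce)
    ultimately show ?thesis by (simp add: ac_simps)
  qed
  finally show ?case by (simp add: n_def)
qed

lemma card_gt_le_sum_exp:
  fixes g :: "'b \<Rightarrow> real"
  assumes "finite P" "l \<ge> 0"
  shows "real (card {p \<in> P. g p > t}) \<le> (\<Sum>p\<in>P. exp (l * g p)) * exp (- l * t)"
proof -
  have "real (card {p \<in> P. g p > t}) = (\<Sum>p\<in>{p \<in> P. g p > t}. 1)"
    by simp
  also have "\<dots> \<le> (\<Sum>p\<in>{p \<in> P. g p > t}. exp (l * (g p - t)))"
    using assms(2) by (intro sum_mono) simp
  also have "\<dots> \<le> (\<Sum>p\<in>P. exp (l * (g p - t)))"
    using assms(1) by (intro sum_mono2) auto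
  also have "\<dots> = (\<Sum>p\<in>P. exp (l * g p)) * exp (- l * t)"
    by (simp add: sum_distrib_right right_diff_distrib exp_diff exp_minus divide_inverse)
  finally show ?thesis .
qed

lemma card_centered_sum_take_gt_le:
  fixes x :: "'a \<Rightarrow> real"
  assumes "finite I" "\<forall>i\<in>I. a \<le> x i \<and> x i \<le> b" "a < b" "1 \<le> m" "m \<le> card I" "t \<ge> 0"
  shows "real (card {p \<in> permutations_of_set I. centered_sum I x (take m p) > t})
           \<le> fact (card I) * exp (- 2 * t\<^sup>2 / ((b - a)\<^sup>2 * serfling_factor (card I) m))"
proof -
  define V where "V = (b - a)\<^sup>2 * serfling_factor (card I) m"
  define l where "l = 4 * t / V"
  have V: "V > 0" using assms by (simp add: V_def serfling_factor_pos)
  then have l: "l \<ge> 0" using assms(6) by (simp add: l_def)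
  have exponent: "l\<^sup>2 * V / 8 + - l * t = - 2 * t\<^sup>2 / V"
    using V by (simp add: l_def field_simps power2_eq_square)
  have "real (card {p \<in> permutations_of_set I. centered_sum I x (take m p) > t})
      \<le> (\<Sum>p\<in>permutations_of_set I. exp (l * centered_sum I x (take m p))) * exp (- l * t)"
    using l by (intro card_gt_le_sum_exp) simp_all
  also have "\<dots> \<le> fact (card I) * exp (l\<^sup>2 * V / 8) * exp (- l * t)"
    using sum_exp_centered_sum_take_le[OF assms(1,2,5) l] by (simp add: V_def mult.assoc)
  also have "\<dots> = fact (card I) * exp (- 2 * t\<^sup>2 / V)"
    using exponent by (simp add: mult.assoc flip: exp_add)
  finally show ?thesis by (simp add: V_def)
qed

text \<open>The first \<open>m\<close> draws deviate by minus the deviation of the last \<open>n - m\<close> draws,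
  so the bound for \<open>n - m\<close> draws from \<open>-x\<close> applies.\<close>
lemma card_centered_sum_take_gt_le_rev:
  fixes x :: "'a \<Rightarrow> real"
  assumes "finite I" "\<forall>i\<in>I. a \<le> x i \<and> x i \<le> b" "a < b" "m < card I" "t \<ge> 0"
  shows "real (card {p \<in> permutations_of_set I. centered_sum I x (take m p) > t})
           \<le> fact (card I) * exp (- 2 * t\<^sup>2 / ((b - a)\<^sup>2 * serfling_factor (card I) (card I - m)))"
proof -
  let ?P = "permutations_of_set I"
  let ?S = "\<lambda>p. centered_sum I (\<lambda>i. - x i) (take (card I - m) p)"
  have rev_mem: "rev p \<in> ?P \<longleftrightarrow> p \<in> ?P" for p
    by (simp add: permutations_of_set_def)
  have "{p \<in> ?P. centered_sum I x (take m p) > t} = {p \<in> ?P. ?S (rev p) > t}"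
    using centered_sum_take_eq_rev[OF assms(1)] by auto
  moreover have "bij_betw rev {p \<in> ?P. ?S (rev p) > t} {p \<in> ?P. ?S p > t}"
    by (rule bij_betw_byWitness[where f' = rev]) (auto simp: rev_mem)
  ultimately have "card {p \<in> ?P. centered_sum I x (take m p) > t} = card {p \<in> ?P. ?S p > t}"
    by (simp add: bij_betw_same_card)
  moreover have "real (card {p \<in> ?P. ?S p > t})
      \<le> fact (card I) * exp (- 2 * t\<^sup>2 / ((- a - - b)\<^sup>2 * serfling_factor (card I) (card I - m)))"
    using assms by (intro card_centered_sum_take_gt_le) auto
  ultimately show ?thesis by simp
qed

lemma sample_size_imp_serfling_factor_le:
  fixes u :: real
  assumes "u \<ge> 0" "1 \<le> m" "m < n"
    and "real m \<ge> min ((u + 1) / (1 + u / n)) ((u + u / n) / (1 + u / n))"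
  shows "u * serfling_factor n (n - m) \<le> (real m)\<^sup>2 \<or> u * serfling_factor n m \<le> (real m)\<^sup>2"
proof -
  have n: "real n > 0" and m: "real m \<ge> 1" using assms by auto
  have "1 + u / n > 0" using assms(1) n by (simp add: add_pos_nonneg)
  with assms(4) consider "u + 1 \<le> m * (1 + u / n)" | "u + u / n \<le> m * (1 + u / n)"
    by (auto simp: min_def pos_divide_le_eq split: if_splits)
  then show ?thesis
  proof cases
    case 1
    then have "u * (real n - m) \<le> n * (real m - 1)" using n by (simp add: field_simps)
    then have "u * (real n - m) * (m + 1) \<le> n * (real m - 1) * (m + 1)" using m by (intro mult_right_mono) auto
    then have "u * ((real n - m) * (m + 1) / n) \<le> (real m)\<^sup>2"
      using n by (simp add: field_simps power2_eq_square)
    then show ?thesis using assms(3) by (simp add: serfling_factor_def of_nat_diff)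
  next
    case 2
    then have "n * (u + u / n) \<le> n * (m * (1 + u / n))" using n by (intro mult_left_mono) auto
    moreover have "n * (u + u / n) = u * n + u" "n * (m * (1 + u / n)) = m * n + m * u"
      using n by (simp_all add: field_simps)
    ultimately have "u * (real n + 1 - m) \<le> real m * n" by (simp add: algebra_simps)
    then have "u * (real n + 1 - m) * m \<le> real m * n * m" using m by (intro mult_right_mono) auto
    then show ?thesis using n by (simp add: serfling_factor_def field_simps power2_eq_square)
  qed
qed

lemma exp_neg_le_of_sample_size:
  assumes "0 < \<delta>" "0 < \<epsilon>" "a < b" "V > 0"
    and "ln (1 / \<delta>) / 2 * (b - a)\<^sup>2 / \<epsilon>\<^sup>2 * V \<le> (real m)\<^sup>2"
  shows "exp (- 2 * (m * \<epsilon>)\<^sup>2 / ((b - a)\<^sup>2 * V)) \<le> \<delta>"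
proof -
  have "ln (1 / \<delta>) \<le> 2 * (m * \<epsilon>)\<^sup>2 / ((b - a)\<^sup>2 * V)"
    using assms by (simp add: field_simps power_mult_distrib)
  then have "- 2 * (m * \<epsilon>)\<^sup>2 / ((b - a)\<^sup>2 * V) \<le> ln \<delta>"
    using assms(1) by (simp add: ln_div)
  then show ?thesis
    using assms(1) by (metis exp_le_cancel_iff exp_ln)
qed

lemma card_centered_sum_take_gt_le_delta:
  fixes x :: "'a \<Rightarrow> real" and a b \<epsilon> \<delta> :: real
  defines "u \<equiv> ln (1 / \<delta>) / 2 * (b - a)\<^sup>2 / \<epsilon>\<^sup>2"
  assumes "finite I" "\<forall>i\<in>I. a \<le> x i \<and> x i \<le> b" "a < b" "0 < \<epsilon>" "0 < \<delta>" "\<delta> < 1"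
    and "1 \<le> m" "m < card I"
    and "real m \<ge> min ((u + 1) / (1 + u / card I)) ((u + u / card I) / (1 + u / card I))"
  shows "real (card {p \<in> permutations_of_set I. centered_sum I x (take m p) > m * \<epsilon>})
           \<le> \<delta> * fact (card I)"
proof -
  let ?B = "{p \<in> permutations_of_set I. centered_sum I x (take m p) > m * \<epsilon>}"
  have tail: "real (card ?B) \<le> \<delta> * fact (card I)"
    if "V > 0" "u * V \<le> (real m)\<^sup>2"
      and "real (card ?B) \<le> fact (card I) * exp (- 2 * (m * \<epsilon>)\<^sup>2 / ((b - a)\<^sup>2 * V))" for V
  proof -
    have "exp (- 2 * (m * \<epsilon>)\<^sup>2 / ((b - a)\<^sup>2 * V)) \<le> \<delta>"
      using that(1,2) assms by (intro exp_neg_le_of_sample_size) (auto simp: u_def)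
    then have "fact (card I) * exp (- 2 * (m * \<epsilon>)\<^sup>2 / ((b - a)\<^sup>2 * V)) \<le> \<delta> * fact (card I)"
      by (simp add: mult.commute)
    with that(3) show ?thesis by linarith
  qed
  have "u \<ge> 0" using assms by (simp add: u_def)
  then consider "u * serfling_factor (card I) (card I - m) \<le> (real m)\<^sup>2"
    | "u * serfling_factor (card I) m \<le> (real m)\<^sup>2"
    using sample_size_imp_serfling_factor_le assms by blast
  then show ?thesis
  proof cases
    case 1
    have "serfling_factor (card I) (card I - m) > 0"
      using assms by (intro serfling_factor_pos) auto
    moreover note 1
    moreover have "real (card ?B)
        \<le> fact (card I) * exp (- 2 * (m * \<epsilon>)\<^sup>2 / ((b - a)\<^sup>2 * serfling_factor (card I) (card I - m)))"
      using assms by (intro card_centered_sum_take_gt_le_rev) auto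
    ultimately show ?thesis by (rule tail)
  next
    case 2
    have "serfling_factor (card I) m > 0"
      using assms by (intro serfling_factor_pos) auto
    moreover note 2
    moreover have "real (card ?B)
        \<le> fact (card I) * exp (- 2 * (m * \<epsilon>)\<^sup>2 / ((b - a)\<^sup>2 * serfling_factor (card I) m))"
      using assms by (intro card_centered_sum_take_gt_le) auto
    ultimately show ?thesis by (rule tail)
  qed
qed

theorem lemma1:
  fixes X :: "real list" and N m :: nat and a b \<epsilon> \<delta> :: real
  assumes "N > 1" and "length X = N" and "a < b"
    and "\<forall>x\<in>set X. a \<le> x \<and> x \<le> b"
    and "0 < \<epsilon>" and "\<epsilon> < 1" and "0 < \<delta>" and "\<delta> < 1"
    and "1 \<le> m" and "m < N"
    and "real m \<ge> min
          (((ln (1/\<delta>) / 2) * (b - a)^2 / \<epsilon>^2 + 1) / (1 + ((ln (1/\<delta>) / 2) * (b - a)^2 / \<epsilon>^2) / real N))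
          (((ln (1/\<delta>) / 2) * (b - a)^2 / \<epsilon>^2 + ((ln (1/\<delta>) / 2) * (b - a)^2 / \<epsilon>^2) / real N)
             / (1 + ((ln (1/\<delta>) / 2) * (b - a)^2 / \<epsilon>^2) / real N))"
  shows "measure_pmf.prob (sample_wor X m)
           {S. (1 / real m) * sum_list S - (1 / real N) * sum_list X \<le> \<epsilon>} \<ge> 1 - \<delta>"
proof -
  define x where "x = (\<lambda>i. X ! i)"
  let ?I = "{..<N}"
  let ?P = "permutations_of_set ?I"
  let ?E = "{S. (1 / real m) * sum_list S - (1 / real N) * sum_list X \<le> \<epsilon>}"
  let ?bad = "{p \<in> ?P. centered_sum ?I x (take m p) > m * \<epsilon>}"
  have x: "\<forall>i\<in>?I. a \<le> x i \<and> x i \<le> b"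
    using assms(2,4) by (auto simp: x_def)
  have "sample_wor X m = map_pmf (map x \<circ> take m) (pmf_of_set ?P)"
    using map_pmf_take_permutations_of_set[of ?I m] assms(2,10)
    by (simp add: sample_wor_def index_samples_def x_def flip: pmf.map_comp)
  moreover have "?P \<inter> (map x \<circ> take m) -` ?E = ?P - ?bad"
  proof -
    have "avg ?I x = sum_list X / N"
      using assms(2) by (simp add: avg_def x_def sum_list_sum_nth atLeast0LessThan)
    moreover have "length (take m p) = m" if "p \<in> ?P" for p
      using that assms(10) by (simp add: length_finite_permutations_of_set)
    ultimately show ?thesis
      using assms(9) by (auto simp: centered_sum_eq field_simps)
  qed
  moreover have "real (card ?bad) \<le> \<delta> * fact N"
    using card_centered_sum_take_gt_le_delta[of ?I a x b \<epsilon> \<delta> m] x assms by simp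
  moreover have "card ?bad \<le> card ?P"
    by (intro card_mono) auto
  ultimately have "measure_pmf.prob (sample_wor X m) ?E = (fact N - real (card ?bad)) / fact N"
    by (simp add: measure_pmf_of_set card_Diff_subset of_nat_diff)
  also have "\<dots> \<ge> 1 - \<delta>"
    using \<open>real (card ?bad) \<le> \<delta> * fact N\<close> by (simp add: field_simps)
  finally show ?thesis .
qed

end
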